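(* Let $\mathcal{T}$ be a compact interval, $\boldsymbol{\phi}=(\phi_1,\dots,\phi_m)'$ linearly independent functions in $L^2(\mathcal{T})$, and let $\mathbf{X}(t)=\mathbf{A}'\boldsymbol{\phi}(t)$ be a rank-$M$ ($M=mp$) $p$-variate process with separable covariance $\mathbf{K}(s,t)=\boldsymbol{\Sigma}^{\mathrm{row}}\kappa(s,t)$, random coefficient matrix $\mathbf{A}=(\mathbf{a}_1,\dots,\mathbf{a}_p)\in\mathbb{R}^{m\times p}$, mean $\boldsymbol{\mu}(t)=\mathbf{M}_{\mathbf{A}}'\boldsymbol{\phi}(t)$ with $\mathbf{M}_{\mathbf{A}}=(\mathbf{m}_{\mathbf{A},1},\dots,\mathbf{m}_{\mathbf{A},p})=E\mathbf{A}$, and $\kappa(s,t)=\boldsymbol{\phi}'(s)\boldsymbol{\Sigma}^{\mathrm{col}}\boldsymbol{\phi}(t)$ with $\boldsymbol{\Sigma}^{\mathrm{col}}$ positive definite. Let $(\lambda^{\mathrm{row}}_j,\mathbf{v}^{\mathrm{row}}_j)$, $j=1,\dots,p$, be the eigenpairs of $\boldsymbol{\Sigma}^{\mathrm{row}}$ and $v^{\mathrm{row}}_{j,k}=\mathbf{e}_k'\mathbf{v}^{\mathrm{row}}_j$. Then for each $k\in\{1,\dots,p\}$, $$\theta_k(\mathbf{X},\boldsymbol{\mu};\mathbf{K},M)=\sum_{j=1}^p\frac{1}{\lambda^{\mathrm{row}}_j}v^{\mathrm{row}}_{j,k}(\mathbf{a}_k-\mathbf{m}_{\mathbf{A},k}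)'(\boldsymbol{\Sigma}^{\mathrm{col}})^{-1}(\mathbf{A}-\mathbf{M}_{\mathbf{A}})'\mathbf{v}^{\mathrm{row}}_j.$$
   Context: $\boldsymbol{\Sigma}^{\mathrm{row}}$ is $p\times p$ symmetric positive definite. The covariance operator $\mathcal{C}\mathbf{x}(s)=\int\mathbf{K}(s,t)\mathbf{x}(t)dt$ on $L^2(\mathcal{T})^p$ (inner product $\langle\mathbf{x},\mathbf{y}\rangle=\sum_j\int_{\mathcal{T}}x_jy_j$) has orthonormal eigenfunctions $\boldsymbol{\psi}_i$ and nonincreasing eigenvalues $\pi_i$; $\mathrm{fMMD}^2(\mathbf{Y},\boldsymbol{\mu};\mathbf{K},M)=\sum_{i=1}^M\pi_i^{-1}\langle\mathbf{Y}-\boldsymbol{\mu},\boldsymbol{\psi}_i\rangle^2$. With $P=\{1,\dots,p\}$, $\hat X^S_j=X_j$ if $j\in S$ and $\hat X^S_j=\mu_j$ otherwise, the coordinate Shapley contribution is $\theta_k(\mathbf{X},\boldsymbol{\mu};\mathbf{K},M)=\sum_{S\subseteq P\setminus\{k\}}\frac{|S|!(p-|S|-1)!}{p!}[\mathrm{fMMD}^2(\hat{\mathbf{X}}^{S\cup\{k\}},\boldsymbol{\mu};\mathbf{K},M)-\mathrm{fMMD}^2(\hat{\mathbf{X}}^S,\boldsymbol{\mu};\mathbf{K},M)]$. *)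

theory Defs
  imports "HOL-Analysis.Analysis" "HOL-Probability.Probability"
begin

text \<open>Functions on T = {a..b} with values in R^p are represented as
  'p \<Rightarrow> real \<Rightarrow> real (component j, time t).\<close>

definition L2fun :: "real \<Rightarrow> real \<Rightarrow> (real \<Rightarrow> real) \<Rightarrow> bool" where
  "L2fun a b f \<longleftrightarrow> f \<in> borel_measurable (lebesgue_on {a..b})
      \<and> integrable (lebesgue_on {a..b}) (\<lambda>t. (f t)\<^sup>2)"

definition L2vec :: "real \<Rightarrow> real \<Rightarrow> ('p::finite \<Rightarrow> real \<Rightarrow> real) \<Rightarrow> bool" where
  "L2vec a b x \<longleftrightarrow> (\<forall>j. L2fun a b (x j))"

definition ip :: "real \<Rightarrow> real \<Rightarrow> ('p::finite \<Rightarrow> real \<Rightarrow> real) \<Rightarrow> ('p \<Rightarrow> real \<Rightarrow> real) \<Rightarrow> real" where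
  "ip a b x y = (\<Sum>j\<in>UNIV. integral\<^sup>L (lebesgue_on {a..b}) (\<lambda>t. x j t * y j t))"

definition covop :: "real \<Rightarrow> real \<Rightarrow> (real \<Rightarrow> real \<Rightarrow> real^'p^'p) \<Rightarrow> ('p::finite \<Rightarrow> real \<Rightarrow> real)
    \<Rightarrow> ('p \<Rightarrow> real \<Rightarrow> real)" where
  "covop a b K x = (\<lambda>j s. \<Sum>l\<in>UNIV. integral\<^sup>L (lebesgue_on {a..b}) (\<lambda>t. K s t $ j $ l * x l t))"

definition is_eigensystem :: "real \<Rightarrow> real \<Rightarrow> (real \<Rightarrow> real \<Rightarrow> real^'p^'p)
    \<Rightarrow> (nat \<Rightarrow> 'p::finite \<Rightarrow> real \<Rightarrow> real) \<Rightarrow> (nat \<Rightarrow> real) \<Rightarrow> bool" where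
  "is_eigensystem a b K \<psi> \<pi> \<longleftrightarrow>
     (\<forall>i\<ge>1. L2vec a b (\<psi> i))
   \<and> (\<forall>i\<ge>1. \<forall>i'\<ge>1. ip a b (\<psi> i) (\<psi> i') = (if i = i' then 1 else 0))
   \<and> (\<forall>i\<ge>1. \<forall>j. \<forall>s\<in>{a..b}. covop a b K (\<psi> i) j s = \<pi> i * \<psi> i j s)
   \<and> (\<forall>i\<ge>1. \<forall>i'\<ge>i. \<pi> i' \<le> \<pi> i)
   \<and> (\<forall>x. L2vec a b x \<and> (\<forall>i\<ge>1. ip a b x (\<psi> i) = 0) \<longrightarrow> ip a b x x = 0)"

definition fMMD2 :: "real \<Rightarrow> real \<Rightarrow> (nat \<Rightarrow> 'p::finite \<Rightarrow> real \<Rightarrow> real) \<Rightarrow> (nat \<Rightarrow> real) \<Rightarrow> nat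
    \<Rightarrow> ('p \<Rightarrow> real \<Rightarrow> real) \<Rightarrow> ('p \<Rightarrow> real \<Rightarrow> real) \<Rightarrow> real" where
  "fMMD2 a b \<psi> \<pi> M Y \<mu> = (\<Sum>i=1..M. inverse (\<pi> i) * (ip a b (\<lambda>j t. Y j t - \<mu> j t) (\<psi> i))\<^sup>2)"

definition hatX :: "'p set \<Rightarrow> ('p \<Rightarrow> real \<Rightarrow> real) \<Rightarrow> ('p \<Rightarrow> real \<Rightarrow> real) \<Rightarrow> ('p \<Rightarrow> real \<Rightarrow> real)" where
  "hatX S X \<mu> = (\<lambda>j. if j \<in> S then X j else \<mu> j)"

definition shapley :: "real \<Rightarrow> real \<Rightarrow> (nat \<Rightarrow> 'p::finite \<Rightarrow> real \<Rightarrow> real) \<Rightarrow> (nat \<Rightarrow> real) \<Rightarrow> nat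
    \<Rightarrow> 'p \<Rightarrow> ('p \<Rightarrow> real \<Rightarrow> real) \<Rightarrow> ('p \<Rightarrow> real \<Rightarrow> real) \<Rightarrow> real" where
  "shapley a b \<psi> \<pi> M k X \<mu> =
     (\<Sum>S\<in>Pow (UNIV - {k}).
        (fact (card S) * fact (CARD('p) - card S - 1) / fact CARD('p)) *
        (fMMD2 a b \<psi> \<pi> M (hatX (insert k S) X \<mu>) \<mu> - fMMD2 a b \<psi> \<pi> M (hatX S X \<mu>) \<mu>))"

end

(*
  In the coefficients of the basis phi, X - mu is the matrix A - M_A, and the separable covariance
  operator acts on phi-combinations with coefficient matrix E as E |-> Scol G E Srow, where G is
  the Gram matrix of phi. Hence every eigenfunction with nonzero eigenvalue is a phi-combination,
  at most M = mp eigenvalues are nonzero, and Parseval's identity turns the truncated fMMD^2 of the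
  phi-combination with coefficient matrix D into the quadratic form <D, Scol^-1 D Srow^-1>.
  Replacing the coordinates outside a coalition S by the mean keeps only the columns of D in S, so
  the game S |-> fMMD^2 is sum_{j,j' in S} c_{jj'} with symmetric c. Its Shapley value for player k
  is sum_j c_{kj}, because the Shapley weights of the coalitions containing a fixed other player sum
  to 1/2. Expanding Srow^-1 = sum_j v_j v_j' / lambda_j gives the formula.
*)
theory Submission
  imports Defs
begin

section \<open>Linear algebra\<close>

lemma sum_reverse3:
  "(\<Sum>x\<in>A. \<Sum>y\<in>B. \<Sum>z\<in>C. f x y z) = (\<Sum>z\<in>C. \<Sum>y\<in>B. \<Sum>x\<in>A. f x y z)"
  by (rule trans[OF sum.cong[OF refl sum.swap]], rule trans[OF sum.swap],
      rule sum.cong[OF refl sum.swap])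

lemma inner_mmult_left:
  fixes A :: "real^'k^'m" and B :: "real^'p^'k" and C :: "real^'p^'m"
  shows "(A ** B) \<bullet> C = B \<bullet> (transpose A ** C)"
  unfolding inner_vec_def matrix_matrix_mult_def transpose_def
  by (simp add: sum_distrib_left sum_distrib_right mult_ac) (rule sum_reverse3)

lemma inner_mmult_right:
  fixes A :: "real^'p^'q" and B :: "real^'q^'m" and C :: "real^'p^'m"
  shows "(B ** A) \<bullet> C = B \<bullet> (C ** transpose A)"
  unfolding inner_vec_def matrix_matrix_mult_def transpose_def
  by (simp add: sum_distrib_left sum_distrib_right mult_ac) (rule sum.cong[OF refl sum.swap])

lemma inner_matrix_sandwich:
  fixes A :: "real^'m^'m" and X Y :: "real^'p^'m" and B :: "real^'p^'p"
  shows "X \<bullet> (A ** Y ** B) = (transpose A ** X ** transpose B) \<bullet> Y"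
proof -
  have "X \<bullet> (A ** Y ** B) = (A ** (Y ** B)) \<bullet> X"
    by (simp add: inner_commute matrix_mul_assoc)
  also have "\<dots> = (Y ** B) \<bullet> (transpose A ** X)"
    by (rule inner_mmult_left)
  also have "\<dots> = Y \<bullet> (transpose A ** X ** transpose B)"
    by (rule inner_mmult_right)
  finally show ?thesis
    by (simp add: inner_commute)
qed

lemma inner_sandwich_columns:
  fixes X Y :: "real^'p^'m" and Q :: "real^'m^'m" and R :: "real^'p^'p"
  shows "X \<bullet> (Q ** Y ** R) = (\<Sum>j\<in>UNIV. \<Sum>j'\<in>UNIV. column j X \<bullet> (Q *v column j' Y) * R $ j' $ j)"
  unfolding inner_vec_def matrix_matrix_mult_def matrix_vector_mult_def column_def
  by (simp add: sum_distrib_left sum_distrib_right mult_ac)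
     (rule trans[OF sum.swap], rule sum.cong[OF refl sum.swap])

lemma matrix_inv_cancel:
  fixes A :: "real^'n^'n"
  assumes "invertible A"
  shows "A ** matrix_inv A = mat 1" "matrix_inv A ** A = mat 1"
proof -
  have "\<exists>A'. A ** A' = mat 1 \<and> A' ** A = mat 1"
    using assms unfolding invertible_def .
  then have "A ** matrix_inv A = mat 1 \<and> matrix_inv A ** A = mat 1"
    unfolding matrix_inv_def by (rule someI_ex)
  then show "A ** matrix_inv A = mat 1" "matrix_inv A ** A = mat 1"
    by auto
qed

lemma transpose_matrix_inv_symmetric:
  fixes A :: "real^'n^'n"
  assumes sym: "transpose A = A" and inv: "invertible A"
  shows "transpose (matrix_inv A) = matrix_inv A"
proof -
  have "transpose (matrix_inv A) ** A = mat 1"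
    using matrix_inv_cancel[OF inv] sym by (metis matrix_transpose_mul transpose_mat)
  then have "transpose (matrix_inv A) = transpose (matrix_inv A) ** (A ** matrix_inv A)"
    by (simp add: matrix_inv_cancel[OF inv])
  also have "\<dots> = matrix_inv A"
    by (simp add: matrix_mul_assoc \<open>transpose (matrix_inv A) ** A = mat 1\<close>)
  finally show ?thesis .
qed

lemma invertible_if_pos_def:
  fixes S :: "real^'n^'n"
  assumes "\<forall>v. v \<noteq> 0 \<longrightarrow> v \<bullet> (S *v v) > 0"
  shows "invertible S"
proof -
  have "\<forall>v. S *v v = 0 \<longrightarrow> v = 0"
    using assms by (metis inner_zero_right less_irrefl)
  then show ?thesis
    using matrix_left_invertible_ker invertible_left_inverse by blast
qed

lemma eigenvalue_pos_if_pos_def: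
  fixes S :: "real^'n^'n"
  assumes "\<forall>v. v \<noteq> 0 \<longrightarrow> v \<bullet> (S *v v) > 0"
    and "S *v v = lam *\<^sub>R v" and "v \<bullet> v = 1"
  shows "0 < lam"
proof -
  have "v \<noteq> 0"
    using \<open>v \<bullet> v = 1\<close> by auto
  then have "0 < v \<bullet> (S *v v)"
    using assms(1) by blast
  then show ?thesis
    using assms(2,3) by simp
qed

lemma sum_orthonormal_components:
  fixes v :: "'n::finite \<Rightarrow> real^'n"
  assumes orth: "\<And>j j'. v j \<bullet> v j' = (if j = j' then 1 else 0)"
  shows "(\<Sum>q\<in>UNIV. v q $ x * v q $ y) = (if x = y then 1 else 0)"
proof -
  define V :: "real^'n^'n" where "V = (\<chi> q. v q)"
  have "V ** transpose V = mat 1"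
    by (simp add: V_def matrix_mult_transpose_dot_row row_def orth mat_def vec_eq_iff)
  then have "transpose V ** V = mat 1"
    using matrix_left_right_inverse by blast
  then show ?thesis
    by (simp add: V_def matrix_matrix_mult_def transpose_def mat_def vec_eq_iff)
qed

lemma spectral_inverse:
  fixes S :: "real^'n^'n" and v :: "'n::finite \<Rightarrow> real^'n"
  assumes eig: "\<And>q. S *v v q = lam q *\<^sub>R v q"
    and orth: "\<And>j j'. v j \<bullet> v j' = (if j = j' then 1 else 0)"
    and nonzero: "\<And>q. lam q \<noteq> 0"
  shows "(\<chi> x y. \<Sum>q\<in>UNIV. v q $ x * v q $ y / lam q) ** S = mat 1"
proof -
  define R where "R = (\<chi> x y. \<Sum>q\<in>UNIV. v q $ x * v q $ y / lam q)"
  have "(S ** R) $ x $ y = (if x = y then 1 else 0)" for x y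
  proof -
    have "(S ** R) $ x $ y = (\<Sum>q\<in>UNIV. (S *v v q) $ x * v q $ y / lam q)"
      unfolding R_def matrix_matrix_mult_def matrix_vector_mult_def
      by (simp add: sum_distrib_left sum_distrib_right sum_divide_distrib mult_ac)
        (rule sum.swap)
    also have "\<dots> = (\<Sum>q\<in>UNIV. v q $ x * v q $ y)"
      using nonzero by (simp add: eig)
    finally show ?thesis
      using sum_orthonormal_components[OF orth] by simp
  qed
  then have "S ** R = mat 1"
    by (simp add: vec_eq_iff mat_def)
  then show ?thesis
    unfolding R_def using matrix_left_right_inverse by blast
qed

lemma card_le_DIM_if_biorthogonal:
  fixes u v :: "'i \<Rightarrow> 'a::euclidean_space"
  assumes I: "finite I" and biorth: "\<And>i j. i \<in> I \<Longrightarrow> j \<in> I \<Longrightarrow> u i \<bullet> v j = (if i = j then 1 else 0)"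
  shows "card I \<le> DIM('a)"
proof -
  have inj: "inj_on u I"
  proof (rule inj_onI)
    fix i i' assume "i \<in> I" "i' \<in> I" "u i = u i'"
    then show "i = i'"
      using biorth[of i i'] biorth[of i' i'] by (auto split: if_splits)
  qed
  have "independent (u ` I)"
  proof (rule independent_if_scalars_zero)
    show "finite (u ` I)"
      using I by simp
    fix f x assume zero: "(\<Sum>y\<in>u ` I. f y *\<^sub>R y) = 0" and "x \<in> u ` I"
    then obtain i0 where i0: "i0 \<in> I" "x = u i0"
      by auto
    have "0 = (\<Sum>y\<in>u ` I. f y *\<^sub>R y) \<bullet> v i0"
      using zero by simp
    also have "\<dots> = (\<Sum>i\<in>I. f (u i) * (u i \<bullet> v i0))"
      by (simp add: sum.reindex[OF inj] inner_sum_left)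
    also have "\<dots> = (\<Sum>i\<in>I. if i = i0 then f (u i) else 0)"
      by (rule sum.cong) (use biorth i0 in auto)
    also have "\<dots> = f x"
      using i0 I by simp
    finally show "f x = 0" ..
  qed
  then show ?thesis
    using independent_bound card_image[OF inj] by fastforce
qed

lemma sum_column_form_spectral:
  fixes D :: "real^'p^'m" and Q :: "real^'m^'m" and v :: "'q::finite \<Rightarrow> real^'p"
  shows "(\<Sum>j\<in>UNIV. column k D \<bullet> (Q *v column j D) * (\<Sum>q\<in>UNIV. v q $ j * v q $ k / lam q))
       = (\<Sum>q\<in>UNIV. 1 / lam q * v q $ k * (column k D \<bullet> (Q *v (D *v v q))))"
proof -
  have expand: "column k D \<bullet> (Q *v (D *v v q))
      = (\<Sum>j\<in>UNIV. v q $ j * (column k D \<bullet> (Q *v column j D)))" for q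
    by (simp only: matrix_mult_sum[of D] vec.sum matrix_vector_mult_scaleR inner_sum_right inner_scaleR_right
        scalar_mult_eq_scaleR)
  have "(\<Sum>j\<in>UNIV. column k D \<bullet> (Q *v column j D) * (\<Sum>q\<in>UNIV. v q $ j * v q $ k / lam q))
      = (\<Sum>j\<in>UNIV. \<Sum>q\<in>UNIV. 1 / lam q * v q $ k * (v q $ j * (column k D \<bullet> (Q *v column j D))))"
    by (simp add: sum_distrib_left mult_ac)
  also have "\<dots> = (\<Sum>q\<in>UNIV. \<Sum>j\<in>UNIV. 1 / lam q * v q $ k * (v q $ j * (column k D \<bullet> (Q *v column j D))))"
    by (rule sum.swap)
  also have "\<dots> = (\<Sum>q\<in>UNIV. 1 / lam q * v q $ k * (column k D \<bullet> (Q *v (D *v v q))))"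
    by (simp add: expand sum_distrib_left)
  finally show ?thesis .
qed

section \<open>Shapley values of quadratic games\<close>

definition shapley_weight :: "nat \<Rightarrow> nat \<Rightarrow> real" where
  "shapley_weight n s = fact s * fact (n - s - 1) / fact n"

definition shapley_value :: "('p::finite set \<Rightarrow> real) \<Rightarrow> 'p \<Rightarrow> real" where
  "shapley_value F k = (\<Sum>S\<in>Pow (UNIV - {k}).
      shapley_weight CARD('p) (card S) * (F (insert k S) - F S))"

lemma shapley_eq_shapley_value:
  "shapley a b \<psi> \<pi> M k X \<mu> = shapley_value (\<lambda>S. fMMD2 a b \<psi> \<pi> M (hatX S X \<mu>) \<mu>) k"
  by (simp add: shapley_def shapley_value_def shapley_weight_def)

lemma sum_shapley_weight:
  assumes "finite A"
  shows "(\<Sum>S\<in>Pow A. shapley_weight (card A + 1) (card S)) = 1"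
proof -
  let ?w = "\<lambda>S. shapley_weight (card A + 1) (card S)"
  have "(\<Sum>S\<in>Pow A. ?w S) = (\<Sum>s\<in>{0..card A}. \<Sum>S\<in>{S\<in>Pow A. card S = s}. ?w S)"
    by (rule sum.group[symmetric]) (auto simp: assms card_mono)
  also have "\<dots> = (\<Sum>s\<in>{0..card A}. 1 / real (card A + 1))"
  proof (rule sum.cong[OF refl])
    fix s assume s: "s \<in> {0..card A}"
    have "(\<Sum>S\<in>{S\<in>Pow A. card S = s}. ?w S) = real (card A choose s) * shapley_weight (card A + 1) s"
      using n_subsets[OF assms, of s] by (simp add: Pow_def)
    also have "\<dots> = real (card A choose s) * (fact s * fact (card A - s) / fact (card A + 1))"
      by (simp add: shapley_weight_def)
    also have "\<dots> = 1 / real (card A + 1)"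
    proof -
      have "fact (card A) + fact (card A) * real (card A) > (0::real)"
        by (simp add: add_pos_nonneg)
      then show ?thesis
        using s by (simp add: binomial_fact field_simps)
    qed
    finally show "(\<Sum>S\<in>{S\<in>Pow A. card S = s}. ?w S) = 1 / real (card A + 1)" .
  qed
  also have "\<dots> = 1"
    by simp
  finally show ?thesis .
qed

text \<open>Complementation within \<open>A\<close> preserves the weights and swaps the coalitions
  containing \<open>j\<close> with those avoiding it.\<close>
lemma sum_shapley_weight_mem:
  assumes A: "finite A" and j: "j \<in> A"
  shows "(\<Sum>S\<in>{S\<in>Pow A. j \<in> S}. shapley_weight (card A + 1) (card S)) = 1 / 2"
proof -
  let ?w = "\<lambda>S. shapley_weight (card A + 1) (card S)"
  have "?w (A - S) = ?w S" if "S \<subseteq> A" for S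
    using A that by (simp add: shapley_weight_def card_Diff_subset finite_subset card_mono)
  then have "(\<Sum>S\<in>{S\<in>Pow A. j \<in> S}. ?w S) = (\<Sum>S\<in>{S\<in>Pow A. j \<notin> S}. ?w S)"
    by (intro sum.reindex_bij_witness[where i="\<lambda>S. A - S" and j="\<lambda>S. A - S"]) (use j in auto)
  moreover have "(\<Sum>S\<in>{S\<in>Pow A. j \<in> S}. ?w S) + (\<Sum>S\<in>{S\<in>Pow A. j \<notin> S}. ?w S) = 1"
  proof -
    have "Pow A = {S\<in>Pow A. j \<in> S} \<union> {S\<in>Pow A. j \<notin> S}"
      by blast
    then have "(\<Sum>S\<in>Pow A. ?w S) = (\<Sum>S\<in>{S\<in>Pow A. j \<in> S}. ?w S) + (\<Sum>S\<in>{S\<in>Pow A. j \<notin> S}. ?w S)"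
      using A by (metis (no_types, lifting) sum.union_disjoint finite_Pow_iff finite_Un
          disjoint_iff mem_Collect_eq)
    then show ?thesis
      using sum_shapley_weight[OF A] by simp
  qed
  ultimately show ?thesis
    by linarith
qed

lemma shapley_value_quadratic_game:
  fixes c :: "'p::finite \<Rightarrow> 'p \<Rightarrow> real"
  assumes sym: "\<And>i j. c i j = c j i"
  shows "shapley_value (\<lambda>S. \<Sum>j\<in>S. \<Sum>j'\<in>S. c j j') k = (\<Sum>j\<in>UNIV. c k j)"
proof -
  define A where "A = (UNIV :: 'p set) - {k}"
  let ?w = "\<lambda>S. shapley_weight (card A + 1) (card S)"
  have A: "finite A" "CARD('p) = card A + 1"
    by (simp_all add: A_def card_Diff_subset)
  have marginal: "(\<Sum>j\<in>insert k S. \<Sum>j'\<in>insert k S. c j j') - (\<Sum>j\<in>S. \<Sum>j'\<in>S. c j j')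
      = c k k + 2 * (\<Sum>j\<in>S. c k j)" if "S \<in> Pow A" for S
  proof -
    have "k \<notin> S" "finite S"
      using that A_def by auto
    then have "(\<Sum>j\<in>insert k S. \<Sum>j'\<in>insert k S. c j j')
        = c k k + (\<Sum>j\<in>S. c k j) + (\<Sum>j\<in>S. c j k) + (\<Sum>j\<in>S. \<Sum>j'\<in>S. c j j')"
      by (simp add: sum.distrib)
    moreover have "(\<Sum>j\<in>S. c j k) = (\<Sum>j\<in>S. c k j)"
      using sym by simp
    ultimately show ?thesis
      by simp
  qed
  have swap: "(\<Sum>S\<in>Pow A. \<Sum>j\<in>S. f S j) = (\<Sum>j\<in>A. \<Sum>S\<in>{S\<in>Pow A. j \<in> S}. f S j)"
    for f :: "'p set \<Rightarrow> 'p \<Rightarrow> real"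
  proof -
    have "(\<Sum>S\<in>Pow A. \<Sum>j\<in>S. f S j) = (\<Sum>S\<in>Pow A. \<Sum>j\<in>{j\<in>A. j \<in> S}. f S j)"
      by (rule sum.cong[OF refl], rule sum.cong) auto
    also have "\<dots> = (\<Sum>j\<in>A. \<Sum>S\<in>{S\<in>Pow A. j \<in> S}. f S j)"
      using A(1) by (intro sum.swap_restrict) auto
    finally show ?thesis .
  qed
  have "shapley_value (\<lambda>S. \<Sum>j\<in>S. \<Sum>j'\<in>S. c j j') k
      = (\<Sum>S\<in>Pow A. ?w S * (c k k + 2 * (\<Sum>j\<in>S. c k j)))"
    unfolding shapley_value_def A_def[symmetric] A(2) by (rule sum.cong[OF refl]) (simp add: marginal)
  also have "\<dots> = c k k * (\<Sum>S\<in>Pow A. ?w S) + 2 * (\<Sum>S\<in>Pow A. \<Sum>j\<in>S. ?w S * c k j)"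
    by (simp add: distrib_left sum.distrib sum_distrib_left sum_distrib_right mult_ac)
  also have "\<dots> = c k k + 2 * (\<Sum>j\<in>A. c k j * (\<Sum>S\<in>{S\<in>Pow A. j \<in> S}. ?w S))"
    unfolding swap sum_shapley_weight[OF A(1)] by (simp add: sum_distrib_left mult.commute)
  also have "\<dots> = c k k + (\<Sum>j\<in>A. c k j)"
  proof -
    have "(\<Sum>j\<in>A. c k j * (\<Sum>S\<in>{S\<in>Pow A. j \<in> S}. ?w S)) = (\<Sum>j\<in>A. c k j / 2)"
      using sum_shapley_weight_mem[OF A(1)] by (intro sum.cong) simp_all
    then show ?thesis
      by (simp add: sum_divide_distrib[symmetric])
  qed
  also have "\<dots> = (\<Sum>j\<in>UNIV. c k j)"
    unfolding A_def by (simp add: sum.remove[of UNIV k])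
  finally show ?thesis .
qed

definition restrict_columns :: "'p set \<Rightarrow> real^'p^'m \<Rightarrow> real^'p^'m" where
  "restrict_columns S D = (\<chi> l j. if j \<in> S then D $ l $ j else 0)"

lemma inner_restrict_columns:
  fixes D :: "real^'p::finite^'m::finite" and Q :: "real^'m^'m" and R :: "real^'p^'p"
  shows "restrict_columns S D \<bullet> (Q ** restrict_columns S D ** R)
       = (\<Sum>j\<in>S. \<Sum>j'\<in>S. column j D \<bullet> (Q *v column j' D) * R $ j' $ j)"
proof -
  have "column j (restrict_columns S D) = (if j \<in> S then column j D else 0)" for j
    by (simp add: restrict_columns_def column_def vec_eq_iff)
  then have "column j (restrict_columns S D) \<bullet> (Q *v column j' (restrict_columns S D)) * R $ j' $ j
      = (if j \<in> S \<and> j' \<in> S then column j D \<bullet> (Q *v column j' D) * R $ j' $ j else 0)" for j j'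
    by simp
  then have "restrict_columns S D \<bullet> (Q ** restrict_columns S D ** R)
      = (\<Sum>j\<in>UNIV. \<Sum>j'\<in>UNIV. if j \<in> S \<and> j' \<in> S
          then column j D \<bullet> (Q *v column j' D) * R $ j' $ j else 0)"
    by (simp add: inner_sandwich_columns)
  also have "\<dots> = (\<Sum>j\<in>UNIV. if j \<in> S then (\<Sum>j'\<in>UNIV. if j' \<in> S
          then column j D \<bullet> (Q *v column j' D) * R $ j' $ j else 0) else 0)"
    by (intro sum.cong refl) auto
  also have "\<dots> = (\<Sum>j\<in>S. \<Sum>j'\<in>S. column j D \<bullet> (Q *v column j' D) * R $ j' $ j)"
    by (simp add: sum.inter_restrict[symmetric])
  finally show ?thesis .
qed

lemma shapley_value_restricted_quadratic_form:
  fixes D :: "real^'p::finite^'m::finite" and Q :: "real^'m^'m" and R :: "real^'p^'p"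
  assumes Q: "transpose Q = Q" and R: "transpose R = R"
  shows "shapley_value (\<lambda>S. restrict_columns S D \<bullet> (Q ** restrict_columns S D ** R)) k
       = (\<Sum>j\<in>UNIV. column k D \<bullet> (Q *v column j D) * R $ j $ k)"
proof -
  have "x \<bullet> (Q *v y) = y \<bullet> (Q *v x)" for x y :: "real^'m"
    by (metis Q dot_lmul_matrix inner_commute transpose_matrix_vector)
  moreover have "R $ i $ j = R $ j $ i" for i j
    by (metis R transpose_def vec_lambda_beta)
  ultimately show ?thesis
    unfolding inner_restrict_columns by (subst shapley_value_quadratic_game) auto
qed

section \<open>Square-integrable vector functions\<close>

lemma L2fun_mult_integrable:
  assumes f: "L2fun a b f" and g: "L2fun a b g"
  shows "integrable (lebesgue_on {a..b}) (\<lambda>t. f t * g t)"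
proof (rule Bochner_Integration.integrable_bound[of _ "\<lambda>t. (f t)\<^sup>2 + (g t)\<^sup>2"])
  show "integrable (lebesgue_on {a..b}) (\<lambda>t. (f t)\<^sup>2 + (g t)\<^sup>2)"
    using f g unfolding L2fun_def by (intro Bochner_Integration.integrable_add) auto
  show "(\<lambda>t. f t * g t) \<in> borel_measurable (lebesgue_on {a..b})"
    using f g unfolding L2fun_def by (intro borel_measurable_times) auto
  have "\<bar>f t\<bar> * \<bar>g t\<bar> \<le> \<bar>f t\<bar>\<^sup>2 + \<bar>g t\<bar>\<^sup>2" for t
    using sum_squares_bound[of "\<bar>f t\<bar>" "\<bar>g t\<bar>"] zero_le_mult_iff[of "\<bar>f t\<bar>" "\<bar>g t\<bar>"]
    by linarith
  then show "AE t in lebesgue_on {a..b}. norm (f t * g t) \<le> norm ((f t)\<^sup>2 + (g t)\<^sup>2)"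
    by (simp add: abs_mult)
qed

lemma L2fun_add:
  assumes f: "L2fun a b f" and g: "L2fun a b g"
  shows "L2fun a b (\<lambda>t. f t + g t)"
  unfolding L2fun_def
proof
  show "(\<lambda>t. f t + g t) \<in> borel_measurable (lebesgue_on {a..b})"
    using f g unfolding L2fun_def by (intro borel_measurable_add) auto
  have "integrable (lebesgue_on {a..b}) (\<lambda>t. (f t)\<^sup>2 + (g t)\<^sup>2 + 2 * (f t * g t))"
    using f g L2fun_mult_integrable[OF f g] unfolding L2fun_def by simp
  then show "integrable (lebesgue_on {a..b}) (\<lambda>t. (f t + g t)\<^sup>2)"
    by (simp add: power2_sum mult.assoc)
qed

lemma L2fun_cmult:
  assumes "L2fun a b f"
  shows "L2fun a b (\<lambda>t. c * f t)"
proof -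
  have "f \<in> borel_measurable (lebesgue_on {a..b})" "integrable (lebesgue_on {a..b}) (\<lambda>t. (f t)\<^sup>2)"
    using assms unfolding L2fun_def by auto
  then show ?thesis
    unfolding L2fun_def by (simp add: power_mult_distrib)
qed

lemma L2fun_sum:
  "(\<And>i. i \<in> I \<Longrightarrow> L2fun a b (f i)) \<Longrightarrow> L2fun a b (\<lambda>t. \<Sum>i\<in>I. f i t)"
proof (induction I rule: infinite_finite_induct)
  case (insert i I)
  then show ?case
    by (simp add: L2fun_add)
qed (simp_all add: L2fun_def)

lemma L2fun_diff:
  "L2fun a b f \<Longrightarrow> L2fun a b g \<Longrightarrow> L2fun a b (\<lambda>t. f t - g t)"
  using L2fun_add[OF _ L2fun_cmult[of a b g "-1"]] by simp

lemma ip_integrable: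
  "L2vec a b x \<Longrightarrow> L2vec a b y \<Longrightarrow> integrable (lebesgue_on {a..b}) (\<lambda>t. x j t * y j t)"
  by (simp add: L2vec_def L2fun_mult_integrable)

lemma ip_commute: "ip a b x y = ip a b y x"
  by (simp add: ip_def mult.commute)

lemma ip_cong_left:
  assumes "\<And>j t. t \<in> {a..b} \<Longrightarrow> x j t = x' j t"
  shows "ip a b x y = ip a b x' y"
  unfolding ip_def
  by (rule sum.cong[OF refl], rule Bochner_Integration.integral_cong) (auto simp: assms)

lemma ip_cmult_left: "ip a b (\<lambda>j t. c * x j t) y = c * ip a b x y"
  by (simp add: ip_def mult.assoc sum_distrib_left)

lemma ip_sum_left:
  assumes "finite I" and "\<And>i. i \<in> I \<Longrightarrow> L2vec a b (f i)" and "L2vec a b y"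
  shows "ip a b (\<lambda>j t. \<Sum>i\<in>I. f i j t) y = (\<Sum>i\<in>I. ip a b (f i) y)"
proof -
  have "ip a b (\<lambda>j t. \<Sum>i\<in>I. f i j t) y
      = (\<Sum>j\<in>UNIV. \<Sum>i\<in>I. integral\<^sup>L (lebesgue_on {a..b}) (\<lambda>t. f i j t * y j t))"
    unfolding ip_def sum_distrib_right using assms by (simp add: ip_integrable)
  then show ?thesis
    unfolding ip_def by (simp add: sum.swap[of _ I])
qed

lemma ip_diff_left:
  assumes "L2vec a b x" and "L2vec a b x'" and "L2vec a b y"
  shows "ip a b (\<lambda>j t. x j t - x' j t) y = ip a b x y - ip a b x' y"
  unfolding ip_def using assms
  by (simp add: left_diff_distrib ip_integrable sum_subtractf)

lemma ip_eq_0_if_ip_self_eq_0: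
  assumes x: "L2vec a b x" and y: "L2vec a b y" and xx: "ip a b x x = 0"
  shows "ip a b x y = 0"
proof -
  have "integral\<^sup>L (lebesgue_on {a..b}) (\<lambda>t. x j t * y j t) = 0" for j
  proof -
    have "integral\<^sup>L (lebesgue_on {a..b}) (\<lambda>t. x j t * x j t) = 0"
      using xx unfolding ip_def
      by (subst (asm) sum_nonneg_eq_0_iff) (auto simp: integral_nonneg_AE)
    then have "AE t in lebesgue_on {a..b}. x j t * x j t = 0"
      using integral_nonneg_eq_0_iff_AE[OF ip_integrable[OF x x]] by simp
    then have "AE t in lebesgue_on {a..b}. x j t * y j t = 0"
      by (rule AE_mp[OF _ AE_I2]) simp
    then show ?thesis
      by (rule integral_eq_zero_AE)
  qed
  then show ?thesis
    unfolding ip_def by simp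
qed

lemma eigensystem_parseval:
  assumes sys: "is_eigensystem a b K \<psi> \<pi>" and x: "L2vec a b x" and y: "L2vec a b y"
    and I: "finite I" "\<And>i. i \<in> I \<Longrightarrow> 1 \<le> i"
    and outside: "\<And>i. 1 \<le> i \<Longrightarrow> i \<notin> I \<Longrightarrow> ip a b x (\<psi> i) = 0"
  shows "ip a b x y = (\<Sum>i\<in>I. ip a b x (\<psi> i) * ip a b (\<psi> i) y)"
proof -
  have \<psi>: "\<And>i. 1 \<le> i \<Longrightarrow> L2vec a b (\<psi> i)"
    and orth: "\<And>i i'. 1 \<le> i \<Longrightarrow> 1 \<le> i' \<Longrightarrow> ip a b (\<psi> i) (\<psi> i') = (if i = i' then 1 else 0)"
    and complete: "\<And>z. L2vec a b z \<Longrightarrow> (\<forall>i\<ge>1. ip a b z (\<psi> i) = 0) \<Longrightarrow> ip a b z z = 0"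
    using sys unfolding is_eigensystem_def by blast+
  define p where "p = (\<lambda>j t. \<Sum>i\<in>I. ip a b x (\<psi> i) * \<psi> i j t)"
  have p: "L2vec a b p"
    using \<psi> I(2) unfolding p_def L2vec_def by (auto intro!: L2fun_sum L2fun_cmult)
  have ip_p: "ip a b p z = (\<Sum>i\<in>I. ip a b x (\<psi> i) * ip a b (\<psi> i) z)" if "L2vec a b z" for z
    unfolding p_def using I \<psi> that
    by (subst ip_sum_left) (auto simp: ip_cmult_left L2vec_def intro!: L2fun_cmult)
  define r where "r = (\<lambda>j t. x j t - p j t)"
  have r: "L2vec a b r"
    using x p unfolding r_def L2vec_def by (auto intro: L2fun_diff)
  have "ip a b r (\<psi> i') = 0" if i': "1 \<le> i'" for i'
  proof -
    have "(\<Sum>i\<in>I. ip a b x (\<psi> i) * ip a b (\<psi> i) (\<psi> i'))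
        = (\<Sum>i\<in>I. if i = i' then ip a b x (\<psi> i) else 0)"
    proof (rule sum.cong[OF refl])
      fix i assume "i \<in> I"
      then show "ip a b x (\<psi> i) * ip a b (\<psi> i) (\<psi> i') = (if i = i' then ip a b x (\<psi> i) else 0)"
        using orth[OF I(2) i'] by simp
    qed
    then have "ip a b r (\<psi> i') = ip a b x (\<psi> i') - (if i' \<in> I then ip a b x (\<psi> i') else 0)"
      unfolding r_def using x p \<psi>[OF i'] I(1) by (simp add: ip_diff_left ip_p)
    then show ?thesis
      using outside[OF i'] by auto
  qed
  then have "ip a b r r = 0"
    using complete[OF r] by blast
  then have "ip a b r y = 0"
    by (rule ip_eq_0_if_ip_self_eq_0[OF r y])
  then show ?thesis
    unfolding r_def using x p y by (simp add: ip_diff_left ip_p)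
qed

section \<open>Separable covariance operators on a finite family\<close>

lemma nonincreasing_eq_0_if_few_nonzero:
  fixes \<pi> :: "nat \<Rightarrow> real"
  assumes mono: "\<And>i i'. 1 \<le> i \<Longrightarrow> i \<le> i' \<Longrightarrow> \<pi> i' \<le> \<pi> i"
    and few: "\<And>I. finite I \<Longrightarrow> (\<And>i. i \<in> I \<Longrightarrow> 1 \<le> i \<and> \<pi> i \<noteq> 0) \<Longrightarrow> card I \<le> N"
    and i: "N < i"
  shows "\<pi> i = 0"
proof (rule ccontr)
  assume "\<pi> i \<noteq> 0"
  then consider "0 < \<pi> i" | "\<pi> i < 0"
    by linarith
  then show False
  proof cases
    case 1
    have "card {1..N + 1} \<le> N"
    proof (rule few)
      fix i' assume "i' \<in> {1..N + 1}"
      then show "1 \<le> i' \<and> \<pi> i' \<noteq> 0"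
        using mono[of i' i] i 1 by auto
    qed simp
    then show False
      by simp
  next
    case 2
    have "card {i..i + N} \<le> N"
    proof (rule few)
      fix i' assume "i' \<in> {i..i + N}"
      then show "1 \<le> i' \<and> \<pi> i' \<noteq> 0"
        using mono[of i i'] i 2 by auto
    qed simp
    then show False
      by simp
  qed
qed

locale L2_family =
  fixes a b :: real and \<phi> :: "'m::finite \<Rightarrow> real \<Rightarrow> real"
  assumes L2_family: "\<And>l. L2fun a b (\<phi> l)"
begin

definition phi_comb :: "real^'p::finite^'m \<Rightarrow> 'p \<Rightarrow> real \<Rightarrow> real" where
  "phi_comb E = (\<lambda>j t. \<Sum>l\<in>UNIV. E $ l $ j * \<phi> l t)"

definition phi_inner :: "('p::finite \<Rightarrow> real \<Rightarrow> real) \<Rightarrow> real^'p^'m" where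
  "phi_inner x = (\<chi> l j. integral\<^sup>L (lebesgue_on {a..b}) (\<lambda>t. \<phi> l t * x j t))"

definition gram :: "real^'m^'m" where
  "gram = (\<chi> l l'. integral\<^sup>L (lebesgue_on {a..b}) (\<lambda>t. \<phi> l t * \<phi> l' t))"

lemma L2vec_phi_comb: "L2vec a b (phi_comb E)"
  unfolding L2vec_def phi_comb_def using L2_family by (auto intro!: L2fun_sum L2fun_cmult)

lemma hatX_phi_comb_diff:
  "(\<lambda>j t. hatX S (phi_comb X) (phi_comb M) j t - phi_comb M j t) = phi_comb (restrict_columns S (X - M))"
  by (auto simp: hatX_def phi_comb_def restrict_columns_def left_diff_distrib sum_subtractf)

lemma phi_comb_scaleR: "phi_comb (c *\<^sub>R E) j t = c * phi_comb E j t"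
  by (simp add: phi_comb_def sum_distrib_left mult.assoc)

lemma family_integrable:
  "L2fun a b x \<Longrightarrow> integrable (lebesgue_on {a..b}) (\<lambda>t. \<phi> l t * x t)"
  using L2_family by (rule L2fun_mult_integrable)

lemma ip_phi_comb_left:
  assumes "L2vec a b x"
  shows "ip a b (phi_comb E) x = E \<bullet> phi_inner x"
proof -
  have int: "integrable (lebesgue_on {a..b}) (\<lambda>t. \<phi> l t * x j t)" for l j
    using assms by (simp add: L2vec_def family_integrable)
  have "ip a b (phi_comb E) x
      = (\<Sum>j\<in>UNIV. integral\<^sup>L (lebesgue_on {a..b}) (\<lambda>t. \<Sum>l\<in>UNIV. E $ l $ j * (\<phi> l t * x j t)))"
    unfolding ip_def phi_comb_def by (simp add: sum_distrib_right mult.assoc)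
  also have "\<dots> = (\<Sum>j\<in>UNIV. \<Sum>l\<in>UNIV. E $ l $ j * phi_inner x $ l $ j)"
    unfolding phi_inner_def using int by (simp add: integral_sum)
  also have "\<dots> = E \<bullet> phi_inner x"
    by (simp add: inner_vec_def) (rule sum.swap)
  finally show ?thesis .
qed

lemma phi_inner_phi_comb: "phi_inner (phi_comb E) = gram ** E"
proof -
  have int: "integrable (lebesgue_on {a..b}) (\<lambda>t. \<phi> l t * \<phi> l' t)" for l l'
    using L2_family by (rule family_integrable)
  have "phi_inner (phi_comb E) $ l $ j = (gram ** E) $ l $ j" for l j
  proof -
    have "phi_inner (phi_comb E) $ l $ j
        = integral\<^sup>L (lebesgue_on {a..b}) (\<lambda>t. \<Sum>n\<in>UNIV. E $ n $ j * (\<phi> l t * \<phi> n t))"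
      unfolding phi_inner_def phi_comb_def by (simp add: sum_distrib_left mult_ac)
    also have "\<dots> = (gram ** E) $ l $ j"
      unfolding gram_def matrix_matrix_mult_def using int by (simp add: integral_sum mult.commute)
    finally show ?thesis .
  qed
  then show ?thesis
    by (simp add: vec_eq_iff)
qed

lemma transpose_gram: "transpose gram = gram"
  by (simp add: gram_def transpose_def vec_eq_iff mult.commute)

lemma phi_inner_cong:
  assumes "\<And>j t. t \<in> {a..b} \<Longrightarrow> x j t = y j t"
  shows "phi_inner x = phi_inner y"
  unfolding phi_inner_def using assms
  by (simp add: vec_eq_iff, intro allI Bochner_Integration.integral_cong) auto

lemma gram_invertible:
  assumes indep: "\<forall>c :: 'm \<Rightarrow> real.
    (AE t in lebesgue_on {a..b}. (\<Sum>l\<in>UNIV. c l * \<phi> l t) = 0) \<longrightarrow> (\<forall>l. c l = 0)"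
  shows "invertible gram"
proof -
  have "v = 0" if "gram *v v = 0" for v
  proof -
    define h where "h t = (\<Sum>l\<in>UNIV. v $ l * \<phi> l t)" for t
    have h: "L2fun a b h"
      unfolding h_def using L2_family by (auto intro!: L2fun_sum L2fun_cmult)
    have "integral\<^sup>L (lebesgue_on {a..b}) (\<lambda>t. h t * h t) = v \<bullet> (gram *v v)"
      unfolding h_def gram_def
      by (simp add: sum_product inner_vec_def matrix_vector_mult_def sum_distrib_left
          family_integrable[OF L2_family] mult_ac)
    then have "AE t in lebesgue_on {a..b}. h t * h t = 0"
      using integral_nonneg_eq_0_iff_AE[OF L2fun_mult_integrable[OF h h]] that by simp
    then have "AE t in lebesgue_on {a..b}. (\<Sum>l\<in>UNIV. v $ l * \<phi> l t) = 0"
      by (rule AE_mp[OF _ AE_I2]) (simp add: h_def)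
    then show "v = 0"
      using indep by (simp add: vec_eq_iff)
  qed
  then show ?thesis
    using matrix_left_invertible_ker invertible_left_inverse by blast
qed

lemma covop_separable:
  assumes "L2vec a b x"
  shows "covop a b (\<lambda>s t. ((\<chi> l. \<phi> l s) \<bullet> (C *v (\<chi> l. \<phi> l t))) *\<^sub>R B) x
       = phi_comb (C ** phi_inner x ** transpose B)"
proof (intro ext)
  fix j s
  let ?K = "\<lambda>s t. ((\<chi> l. \<phi> l s) \<bullet> (C *v (\<chi> l. \<phi> l t))) *\<^sub>R B"
  have int: "integrable (lebesgue_on {a..b}) (\<lambda>t. \<phi> l t * x j t)" for l j
    using assms by (simp add: L2vec_def family_integrable)
  have "?K s t $ j $ l' * x l' t
      = (\<Sum>q\<in>UNIV. \<Sum>r\<in>UNIV. (\<phi> q s * C $ q $ r * B $ j $ l') * (\<phi> r t * x l' t))" for t l'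
    by (simp add: inner_vec_def matrix_vector_mult_def sum_distrib_left sum_distrib_right mult_ac)
  then have "covop a b ?K x j s
      = (\<Sum>l'\<in>UNIV. \<Sum>q\<in>UNIV. \<Sum>r\<in>UNIV. (\<phi> q s * C $ q $ r * B $ j $ l') * phi_inner x $ r $ l')"
    unfolding covop_def phi_inner_def using int by (simp add: integral_sum)
  also have "\<dots> = phi_comb (C ** phi_inner x ** transpose B) j s"
    unfolding phi_comb_def matrix_matrix_mult_def transpose_def
    by (simp add: sum_distrib_left mult_ac) (rule sum.swap)
  finally show "covop a b ?K x j s = phi_comb (C ** phi_inner x ** transpose B) j s" .
qed

end

locale separable_eigensystem = L2_family a b \<phi>
  for a b :: real and \<phi> :: "'m::finite \<Rightarrow> real \<Rightarrow> real" +
  fixes C :: "real^'m^'m" and B :: "real^'p::finite^'p"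
    and \<psi> :: "nat \<Rightarrow> 'p \<Rightarrow> real \<Rightarrow> real" and \<pi> :: "nat \<Rightarrow> real"
  assumes eigensystem:
    "is_eigensystem a b (\<lambda>s t. ((\<chi> l. \<phi> l s) \<bullet> (C *v (\<chi> l. \<phi> l t))) *\<^sub>R B) \<psi> \<pi>"
begin

lemma eigenfunction_L2: "1 \<le> i \<Longrightarrow> L2vec a b (\<psi> i)"
  using eigensystem unfolding is_eigensystem_def by blast

lemma eigenfunctions_orthonormal:
  "1 \<le> i \<Longrightarrow> 1 \<le> i' \<Longrightarrow> ip a b (\<psi> i) (\<psi> i') = (if i = i' then 1 else 0)"
  using eigensystem unfolding is_eigensystem_def by blast

lemma eigenvalues_nonincreasing: "1 \<le> i \<Longrightarrow> i \<le> i' \<Longrightarrow> \<pi> i' \<le> \<pi> i"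
  using eigensystem unfolding is_eigensystem_def by blast

lemma eigenfunction_phi_comb:
  assumes i: "1 \<le> i" and t: "t \<in> {a..b}"
  shows "\<pi> i * \<psi> i j t = phi_comb (C ** phi_inner (\<psi> i) ** transpose B) j t"
  using eigensystem i t covop_separable[OF eigenfunction_L2[OF i]]
  unfolding is_eigensystem_def by metis

lemma phi_inner_eigenfunction:
  assumes i: "1 \<le> i"
  shows "\<pi> i *\<^sub>R phi_inner (\<psi> i) = gram ** (C ** phi_inner (\<psi> i) ** transpose B)"
proof -
  have "\<pi> i *\<^sub>R phi_inner (\<psi> i) = phi_inner (\<lambda>j t. \<pi> i * \<psi> i j t)"
    by (simp add: phi_inner_def vec_eq_iff mult.left_commute)
  also have "\<dots> = phi_inner (phi_comb (C ** phi_inner (\<psi> i) ** transpose B))"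
    by (rule phi_inner_cong) (rule eigenfunction_phi_comb[OF i])
  finally show ?thesis
    by (simp add: phi_inner_phi_comb)
qed

text \<open>On \<open>{a..b}\<close> an eigenfunction with nonzero eigenvalue is \<open>phi_comb (?u i)\<close>, so the
  orthonormality of the \<open>\<psi> i\<close> makes the matrices \<open>?u i\<close> and \<open>phi_inner (\<psi> i)\<close> biorthogonal.\<close>
lemma card_nonzero_eigenvalues:
  assumes I: "finite I" and nonzero: "\<And>i. i \<in> I \<Longrightarrow> 1 \<le> i \<and> \<pi> i \<noteq> 0"
  shows "card I \<le> CARD('m) * CARD('p)"
proof -
  let ?u = "\<lambda>i. inverse (\<pi> i) *\<^sub>R (C ** phi_inner (\<psi> i) ** transpose B)"
  have "?u i \<bullet> phi_inner (\<psi> i') = (if i = i' then 1 else 0)" if "i \<in> I" "i' \<in> I" for i i'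
  proof -
    have "?u i \<bullet> phi_inner (\<psi> i') = ip a b (phi_comb (?u i)) (\<psi> i')"
      using nonzero that by (simp add: ip_phi_comb_left eigenfunction_L2)
    also have "\<dots> = ip a b (\<psi> i) (\<psi> i')"
      using nonzero[OF that(1)]
      by (intro ip_cong_left) (simp add: phi_comb_scaleR eigenfunction_phi_comb[symmetric])
    finally show ?thesis
      using nonzero that by (simp add: eigenfunctions_orthonormal)
  qed
  then have "card I \<le> DIM(real^'p^'m)"
    by (rule card_le_DIM_if_biorthogonal[OF I])
  then show ?thesis
    by simp
qed

lemma eigenvalue_eq_0_beyond_rank: "CARD('m) * CARD('p) < i \<Longrightarrow> \<pi> i = 0"
  by (rule nonincreasing_eq_0_if_few_nonzero[OF eigenvalues_nonincreasing card_nonzero_eigenvalues])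

text \<open>The hypothesis says that the covariance operator maps \<open>phi_comb E\<close> to \<open>phi_comb D\<close>, so the
  \<open>i\<close>-th Fourier coefficient of \<open>phi_comb D\<close> is \<open>\<pi> i\<close> times that of \<open>phi_comb E\<close>; in
  particular it vanishes beyond the rank, and Parseval's identity gives the sum.\<close>
lemma sum_eigen_preimage:
  assumes preimage: "transpose C ** gram ** E ** B = D"
  shows "(\<Sum>i=1..CARD('m) * CARD('p). inverse (\<pi> i) * (ip a b (phi_comb D) (\<psi> i))\<^sup>2)
       = ip a b (phi_comb D) (phi_comb E)"
proof -
  let ?N = "CARD('m) * CARD('p)"
  have ip_D: "ip a b (phi_comb D) (\<psi> i) = D \<bullet> phi_inner (\<psi> i)"
    and ip_E: "ip a b (\<psi> i) (phi_comb E) = E \<bullet> phi_inner (\<psi> i)" if "1 \<le> i" for i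
    using ip_phi_comb_left[OF eigenfunction_L2[OF that]] ip_commute by metis+
  have D_phi_inner: "D \<bullet> phi_inner (\<psi> i) = \<pi> i * (E \<bullet> phi_inner (\<psi> i))" if i: "1 \<le> i" for i
  proof -
    have "\<pi> i * (E \<bullet> phi_inner (\<psi> i)) = E \<bullet> (\<pi> i *\<^sub>R phi_inner (\<psi> i))"
      by simp
    also have "\<dots> = E \<bullet> (gram ** C ** phi_inner (\<psi> i) ** transpose B)"
      by (simp add: phi_inner_eigenfunction[OF i] matrix_mul_assoc)
    also have "\<dots> = (transpose C ** gram ** E ** B) \<bullet> phi_inner (\<psi> i)"
      by (simp add: inner_matrix_sandwich matrix_transpose_mul transpose_gram)
    finally show ?thesis
      using preimage by simp
  qed
  have "ip a b (phi_comb D) (phi_comb E) = (\<Sum>i\<in>{1..?N}. ip a b (phi_comb D) (\<psi> i) * ip a b (\<psi> i) (phi_comb E))"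
    by (rule eigensystem_parseval[OF eigensystem L2vec_phi_comb L2vec_phi_comb])
      (auto simp: ip_D D_phi_inner eigenvalue_eq_0_beyond_rank)
  also have "\<dots> = (\<Sum>i=1..?N. inverse (\<pi> i) * (ip a b (phi_comb D) (\<psi> i))\<^sup>2)"
  proof (rule sum.cong[OF refl])
    fix i assume "i \<in> {1..?N}"
    then have i: "1 \<le> i"
      by simp
    show "ip a b (phi_comb D) (\<psi> i) * ip a b (\<psi> i) (phi_comb E) = inverse (\<pi> i) * (ip a b (phi_comb D) (\<psi> i))\<^sup>2"
      using D_phi_inner[OF i] by (cases "\<pi> i = 0") (simp_all add: ip_D[OF i] ip_E[OF i] power2_eq_square)
  qed
  finally show ?thesis ..
qed

lemma fMMD2_phi_comb:
  assumes gram: "invertible gram"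
    and C: "transpose C ** Q = mat 1" and B: "R ** B = mat 1"
    and diff: "(\<lambda>j t. Y j t - \<mu> j t) = phi_comb D"
  shows "fMMD2 a b \<psi> \<pi> (CARD('m) * CARD('p)) Y \<mu> = D \<bullet> (Q ** D ** R)"
proof -
  define E where "E = matrix_inv gram ** Q ** D ** R"
  have gram_E: "gram ** E = Q ** D ** R"
    by (simp add: E_def matrix_mul_assoc matrix_inv_cancel[OF gram])
  have "transpose C ** gram ** E ** B = transpose C ** (gram ** E) ** B"
    by (simp add: matrix_mul_assoc)
  also have "\<dots> = (transpose C ** Q) ** D ** (R ** B)"
    by (simp add: gram_E matrix_mul_assoc)
  also have "\<dots> = D"
    using C B by simp
  finally have "transpose C ** gram ** E ** B = D" .
  then have "fMMD2 a b \<psi> \<pi> (CARD('m) * CARD('p)) Y \<mu> = ip a b (phi_comb D) (phi_comb E)"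
    unfolding fMMD2_def diff by (rule sum_eigen_preimage)
  also have "\<dots> = D \<bullet> (Q ** D ** R)"
    by (simp add: ip_phi_comb_left[OF L2vec_phi_comb] phi_inner_phi_comb gram_E)
  finally show ?thesis .
qed

end

theorem lemma6:
  fixes a b :: real
    and \<phi> :: "'m::finite \<Rightarrow> real \<Rightarrow> real"
    and P :: "'w measure"
    and A :: "'w \<Rightarrow> real^'p::finite^'m"
    and MA :: "real^'p^'m"
    and Srow :: "real^'p^'p" and Scol :: "real^'m^'m"
    and lamrow :: "'p \<Rightarrow> real" and vrow :: "'p \<Rightarrow> real^'p"
    and \<psi> :: "nat \<Rightarrow> 'p \<Rightarrow> real \<Rightarrow> real" and \<pi> :: "nat \<Rightarrow> real"
    and k :: 'p
  assumes ab: "a < b"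
    and phi_L2: "\<forall>l. L2fun a b (\<phi> l)"
    and phi_indep: "\<forall>c :: 'm \<Rightarrow> real.
        (AE t in lebesgue_on {a..b}. (\<Sum>l\<in>UNIV. c l * \<phi> l t) = 0) \<longrightarrow> (\<forall>l. c l = 0)"
    and Srow_sym: "transpose Srow = Srow"
    and Srow_pd: "\<forall>v. v \<noteq> 0 \<longrightarrow> v \<bullet> (Srow *v v) > 0"
    and Scol_sym: "transpose Scol = Scol"
    and Scol_pd: "\<forall>v. v \<noteq> 0 \<longrightarrow> v \<bullet> (Scol *v v) > 0"
    and eig_row: "\<forall>j. Srow *v vrow j = lamrow j *\<^sub>R vrow j"
    and orth_row: "\<forall>j j'. vrow j \<bullet> vrow j' = (if j = j' then 1 else 0)"
    and P_prob: "prob_space P"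
    and A_rv: "\<forall>l j. integrable P (\<lambda>w. (A w $ l $ j)\<^sup>2) \<and> (\<lambda>w. A w $ l $ j) \<in> borel_measurable P"
    and MA_mean: "\<forall>l j. MA $ l $ j = integral\<^sup>L P (\<lambda>w. A w $ l $ j)"
    and cov: "\<forall>i j. \<forall>s\<in>{a..b}. \<forall>t\<in>{a..b}.
        integral\<^sup>L P (\<lambda>w. ((\<Sum>l\<in>UNIV. A w $ l $ i * \<phi> l s) - (\<Sum>l\<in>UNIV. MA $ l $ i * \<phi> l s))
                          * ((\<Sum>l\<in>UNIV. A w $ l $ j * \<phi> l t) - (\<Sum>l\<in>UNIV. MA $ l $ j * \<phi> l t)))
        = Srow $ i $ j * ((\<chi> l. \<phi> l s) \<bullet> (Scol *v (\<chi> l. \<phi> l t)))"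
    and eigsys: "is_eigensystem a b
        (\<lambda>s t. ((\<chi> l. \<phi> l s) \<bullet> (Scol *v (\<chi> l. \<phi> l t))) *\<^sub>R Srow) \<psi> \<pi>"
  shows "\<forall>w\<in>space P.
    shapley a b \<psi> \<pi> (CARD('m) * CARD('p)) k
      (\<lambda>j t. \<Sum>l\<in>UNIV. A w $ l $ j * \<phi> l t)
      (\<lambda>j t. \<Sum>l\<in>UNIV. MA $ l $ j * \<phi> l t)
    = (\<Sum>j\<in>UNIV. (1 / lamrow j) * (vrow j $ k) *
         ((\<chi> l. A w $ l $ k - MA $ l $ k) \<bullet>
          (matrix_inv Scol *v ((A w - MA) *v vrow j))))"
proof
  \<comment> \<open>The identity holds pathwise and the kernel enters only through \<open>eigsys\<close>.\<close>
  fix w assume "w \<in> space P"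
  interpret separable_eigensystem a b \<phi> Scol Srow \<psi> \<pi>
    using phi_L2 eigsys by unfold_locales auto
  define D where "D = A w - MA"
  define Q where "Q = matrix_inv Scol"
  define R :: "real^'p^'p" where "R = (\<chi> x y. \<Sum>q\<in>UNIV. vrow q $ x * vrow q $ y / lamrow q)"
  have "invertible Scol"
    by (rule invertible_if_pos_def[OF Scol_pd])
  then have Q: "transpose Scol ** Q = mat 1" "transpose Q = Q"
    unfolding Q_def using Scol_sym by (simp_all add: matrix_inv_cancel transpose_matrix_inv_symmetric)
  have "lamrow q \<noteq> 0" for q
    using eigenvalue_pos_if_pos_def[OF Srow_pd, of "vrow q" "lamrow q"] eig_row orth_row by fastforce
  then have R: "R ** Srow = mat 1"
    unfolding R_def using eig_row orth_row by (intro spectral_inverse) auto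
  have R_sym: "transpose R = R"
    by (simp add: R_def transpose_def vec_eq_iff mult.commute)
  have game: "fMMD2 a b \<psi> \<pi> (CARD('m) * CARD('p)) (hatX S (phi_comb (A w)) (phi_comb MA)) (phi_comb MA)
      = restrict_columns S D \<bullet> (Q ** restrict_columns S D ** R)" for S
    unfolding D_def by (rule fMMD2_phi_comb[OF gram_invertible[OF phi_indep] Q(1) R hatX_phi_comb_diff])
  have "shapley a b \<psi> \<pi> (CARD('m) * CARD('p)) k (phi_comb (A w)) (phi_comb MA)
      = (\<Sum>j\<in>UNIV. column k D \<bullet> (Q *v column j D) * R $ j $ k)"
    unfolding shapley_eq_shapley_value game by (rule shapley_value_restricted_quadratic_form[OF Q(2) R_sym])
  also have "\<dots> = (\<Sum>j\<in>UNIV. (1 / lamrow j) * (vrow j $ k) *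
         ((\<chi> l. A w $ l $ k - MA $ l $ k) \<bullet> (matrix_inv Scol *v ((A w - MA) *v vrow j))))"
    unfolding R_def vec_lambda_beta sum_column_form_spectral by (simp add: D_def Q_def column_def)
  finally show "shapley a b \<psi> \<pi> (CARD('m) * CARD('p)) k
      (\<lambda>j t. \<Sum>l\<in>UNIV. A w $ l $ j * \<phi> l t) (\<lambda>j t. \<Sum>l\<in>UNIV. MA $ l $ j * \<phi> l t)
    = (\<Sum>j\<in>UNIV. (1 / lamrow j) * (vrow j $ k) *
         ((\<chi> l. A w $ l $ k - MA $ l $ k) \<bullet> (matrix_inv Scol *v ((A w - MA) *v vrow j))))"
    by (simp add: phi_comb_def)
qed

end
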